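(* Let $q$ be a nonzero complex number with $q^4\ne1$ and let $\zeta,\zeta'$ be nonzero complex numbers with $\zeta\neq\pm1$, $\zeta'\neq\pm1$, $\zeta\zeta'\neq\pm1$. Then the space of (grading-preserving) $U_q(\mathfrak{sl}(1|1))$-module homomorphisms $V(\zeta)\otimes V(\zeta')\to V(\zeta')\otimes V(\zeta)$ is two-dimensional, spanned by $R_{\zeta,\zeta'}$ and $R'_{\zeta,\zeta'}$, where (with $x,y$ and $x',y'$ the standard bases of $V(\zeta)$, $V(\zeta')$) \[R_{\zeta,\zeta'}:\ x\otimes x'\mapsto x'\otimes x,\ x\otimes y'\mapsto \zeta\, y'\otimes x,\ y\otimes x'\mapsto \zeta' x'\otimes y+(1-\zeta^2)\,y'\otimes x,\ y\otimes y'\mapsto -\zeta\zeta'\, y'\otimes y,\] \[R'_{\zeta,\zeta'}:\ x\otimes x'\mapsto -\zeta\zeta'\,x'\otimes x,\ x\otimes y'\mapsto (1-(\zeta')^2)\,x'\otimes y-\zeta'\,y'\otimes x,\ y\otimes x'\mapsto -\zeta\, x'\otimes y,\ y\otimes y'\mapsto y'\otimes y.\]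
   Context: $[\zeta]=\frac{\zeta-\zeta^{-1}}{q-q^{-1}}$. $U_q(\mathfrak{sl}(1|1))$ is the associative superalgebra generated by odd $E,F$ and even invertible central $W^{\pm1}$ with relations $EF+FE=\frac{W-W^{-1}}{q-q^{-1}}$, $E^2=F^2=0$; it is a Hopf superalgebra with $\Delta(W)=W\otimes W$, $\Delta(E)=E\otimes W^{-1}+1\otimes E$, $\Delta(F)=F\otimes1+W\otimes F$, and tensor products of modules use the sign rule $(a\otimes b)(v\otimes w)=(-1)^{|b||v|}(av\otimes bw)$ for homogeneous elements. For $\zeta\in\mathbb{C}^\times$, $V(\zeta)$ is the $(1|1)$-dimensional module with basis $x$ (even), $y$ (odd) and $Ex=0$, $Fx=y$, $Wx=\zeta x$, $Fy=0$, $Ey=[\zeta]x$, $Wy=\zeta y$. Module homomorphisms are required to preserve the $\mathbb{Z}_2$-grading. *)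

theory Defs
  imports Complex_Main
begin

datatype gen = GE | GF | GW | GWi

definition gen_odd :: "gen \<Rightarrow> bool" where
  "gen_odd g \<longleftrightarrow> g = GE \<or> g = GF"

datatype vb = X | Y

lemma UNIV_vb: "(UNIV :: vb set) = {X, Y}"
  using vb.exhaust by auto

instance vb :: finite
  by standard (simp add: UNIV_vb)

text \<open>A finite-dimensional super module given on a basis: parity of each basis vector
  (True = odd) and, for each generator g, its matrix: entry (j,i) is the coefficient of
  basis vector j in g applied to basis vector i.\<close>
type_synonym 'b smod = "('b \<Rightarrow> bool) \<times> (gen \<Rightarrow> 'b \<Rightarrow> 'b \<Rightarrow> complex)"

definition qbr :: "complex \<Rightarrow> complex \<Rightarrow> complex" where
  "qbr q z = (z - inverse z) / (q - inverse q)"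

definition Vmod :: "complex \<Rightarrow> complex \<Rightarrow> vb smod" where
  "Vmod q z = ((\<lambda>b. b = Y),
     (\<lambda>g j i. case g of
        GE \<Rightarrow> (if j = X \<and> i = Y then qbr q z else 0)
      | GF \<Rightarrow> (if j = Y \<and> i = X then 1 else 0)
      | GW \<Rightarrow> (if j = i then z else 0)
      | GWi \<Rightarrow> (if j = i then inverse z else 0)))"

definition sgn_par :: "bool \<Rightarrow> complex" where
  "sgn_par b = (if b then -1 else 1)"

definition kd :: "'b \<Rightarrow> 'b \<Rightarrow> complex" where
  "kd j i = (if j = i then 1 else 0)"

text \<open>Tensor product of modules, basis (i1,i2) = e_i1 \<otimes> e_i2, parity the sum of parities,
  action through the coproduct
  Delta(W^{\<plusminus>1}) = W^{\<plusminus>1}\<otimes>W^{\<plusminus>1}, Delta(E) = E\<otimes>W^{-1} + 1\<otimes>E, Delta(F) = F\<otimes>1 + W\<otimes>F,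
  with the sign rule (a\<otimes>b)(v\<otimes>w) = (-1)^{|b||v|} (av\<otimes>bw).\<close>
definition tensor_mod :: "'a smod \<Rightarrow> 'b smod \<Rightarrow> ('a \<times> 'b) smod" where
  "tensor_mod A B = (let pa = fst A; a = snd A; pb = fst B; b = snd B in
     ((\<lambda>(i1, i2). pa i1 \<noteq> pb i2),
      (\<lambda>g (j1, j2) (i1, i2). case g of
          GW \<Rightarrow> a GW j1 i1 * b GW j2 i2
        | GWi \<Rightarrow> a GWi j1 i1 * b GWi j2 i2
        | GE \<Rightarrow> a GE j1 i1 * b GWi j2 i2 + sgn_par (pa i1) * kd j1 i1 * b GE j2 i2
        | GF \<Rightarrow> a GF j1 i1 * kd j2 i2 + sgn_par (pa i1) * a GW j1 i1 * b GF j2 i2)))"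

definition matmul :: "('c \<Rightarrow> 'b \<Rightarrow> complex) \<Rightarrow> ('b::finite \<Rightarrow> 'a \<Rightarrow> complex) \<Rightarrow> 'c \<Rightarrow> 'a \<Rightarrow> complex" where
  "matmul P Q = (\<lambda>j i. \<Sum>k\<in>UNIV. P j k * Q k i)"

definition is_hom :: "('a::finite) smod \<Rightarrow> ('b::finite) smod \<Rightarrow> ('b \<Rightarrow> 'a \<Rightarrow> complex) \<Rightarrow> bool" where
  "is_hom A B M \<longleftrightarrow>
     (\<forall>j i. fst B j \<noteq> fst A i \<longrightarrow> M j i = 0) \<and>
     (\<forall>g. matmul M (snd A g) = matmul (snd B g) M)"

text \<open>R and R' as matrices from V(z)\<otimes>V(z') (basis (i1,i2)) to V(z')\<otimes>V(z)
  (basis (j1,j2), i.e. e'_j1 \<otimes> e_j2).\<close>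
definition Rmat :: "complex \<Rightarrow> complex \<Rightarrow> vb \<times> vb \<Rightarrow> vb \<times> vb \<Rightarrow> complex" where
  "Rmat z z' t s =
     (if s = (X, X) then (if t = (X, X) then 1 else 0)
      else if s = (X, Y) then (if t = (Y, X) then z else 0)
      else if s = (Y, X) then (if t = (X, Y) then z' else if t = (Y, X) then 1 - z^2 else 0)
      else (if t = (Y, Y) then - z * z' else 0))"

definition R'mat :: "complex \<Rightarrow> complex \<Rightarrow> vb \<times> vb \<Rightarrow> vb \<times> vb \<Rightarrow> complex" where
  "R'mat z z' t s =
     (if s = (X, X) then (if t = (X, X) then - z * z' else 0)
      else if s = (X, Y) then (if t = (X, Y) then 1 - z'^2 else if t = (Y, X) then - z' else 0)
      else if s = (Y, X) then (if t = (X, Y) then - z else 0)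
      else (if t = (Y, Y) then 1 else 0))"

end

theory Submission
  imports Defs
begin

(* Every combination a R + b R' is a homomorphism, since R and R' are and the
   homomorphism conditions are linear.  Conversely, R has entry 1 - z\<^sup>2 at
   y \<otimes> x' \<mapsto> y' \<otimes> x and R' has entry 1 - z'\<^sup>2 at x \<otimes> y' \<mapsto> x' \<otimes> y, and
   each vanishes at the other's entry; so subtracting the matching combination from
   a homomorphism M leaves a homomorphism N with both entries zero.  The grading
   and the commutation relations express N through its entry f at
   x \<otimes> y' \<mapsto> y' \<otimes> x, with N(x \<otimes> x') = z f from F and N(x \<otimes> x') = f / z from E;
   as z\<^sup>2 \<noteq> 1, f = 0 and N = 0. *)

abbreviation Vtensor :: "complex \<Rightarrow> complex \<Rightarrow> complex \<Rightarrow> (vb \<times> vb) smod" where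
  "Vtensor q z z' \<equiv> tensor_mod (Vmod q z) (Vmod q z')"

lemma sum_UNIV_vb_pair:
  "sum f (UNIV :: (vb \<times> vb) set) = f (X, X) + f (X, Y) + f (Y, X) + f (Y, Y)"
proof -
  have UNIV_eq: "(UNIV :: (vb \<times> vb) set) = {(X, X), (X, Y), (Y, X), (Y, Y)}"
    using UNIV_vb by auto
  show ?thesis unfolding UNIV_eq by (simp add: add.assoc)
qed

lemma all_vb_pair_iff: "(\<forall>t :: vb \<times> vb. P t) \<longleftrightarrow> P (X, X) \<and> P (X, Y) \<and> P (Y, X) \<and> P (Y, Y)"
  by (metis vb.exhaust surj_pair)

lemma all_gen_iff: "(\<forall>g. P g) \<longleftrightarrow> P GE \<and> P GF \<and> P GW \<and> P GWi"
  by (metis gen.exhaust)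

lemmas is_hom_Vtensor_expand =
  is_hom_def fun_eq_iff matmul_def sum_UNIV_vb_pair all_vb_pair_iff all_gen_iff

lemma matmul_lincomb_left:
  "matmul (\<lambda>j i. a * M j i + b * N j i) P = (\<lambda>j i. a * matmul M P j i + b * matmul N P j i)"
  by (simp add: matmul_def fun_eq_iff sum.distrib sum_distrib_left algebra_simps)

lemma matmul_lincomb_right:
  "matmul P (\<lambda>j i. a * M j i + b * N j i) = (\<lambda>j i. a * matmul P M j i + b * matmul P N j i)"
  by (simp add: matmul_def fun_eq_iff sum.distrib sum_distrib_left algebra_simps)

lemma is_hom_lincomb:
  assumes "is_hom A B M" and "is_hom A B N"
  shows "is_hom A B (\<lambda>j i. a * M j i + b * N j i)"
  using assms by (simp add: is_hom_def matmul_lincomb_left matmul_lincomb_right)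

lemma is_hom_diff:
  assumes "is_hom A B M" and "is_hom A B N"
  shows "is_hom A B (\<lambda>j i. M j i - N j i)"
  using is_hom_lincomb[OF assms, of 1 "- 1"] by simp

lemma q_minus_inverse_neq_0:
  fixes q :: complex
  assumes "q \<noteq> 0" and "q ^ 4 \<noteq> 1"
  shows "q - inverse q \<noteq> 0"
proof
  assume "q - inverse q = 0"
  then have "q\<^sup>2 = 1"
    using assms(1) by (simp add: field_simps power2_eq_square)
  moreover have "q ^ 4 = q\<^sup>2 * q\<^sup>2"
    by (simp flip: power_add)
  ultimately show False
    using assms(2) by simp
qed

lemma qbr_eq_0_iff:
  assumes "q - inverse q \<noteq> 0" and "z \<noteq> 0"
  shows "qbr q z = 0 \<longleftrightarrow> z\<^sup>2 = 1"
proof -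
  have "qbr q z = 0 \<longleftrightarrow> z - inverse z = 0"
    using assms(1) by (simp add: qbr_def)
  also have "\<dots> \<longleftrightarrow> z\<^sup>2 = 1"
    using assms(2) by (simp add: field_simps power2_eq_square)
  finally show ?thesis .
qed

lemma is_hom_Rmat:
  assumes "q - inverse q \<noteq> 0" and "z \<noteq> 0" and "z' \<noteq> 0"
  shows "is_hom (Vtensor q z z') (Vtensor q z' z) (Rmat z z')"
proof -
  \<comment> \<open>Kept abstract, so that field_simps does not clear the denominators of q - 1/q.\<close>
  define k where "k = q - inverse q"
  have "\<And>t. qbr q t = (t - inverse t) / k"
    by (simp add: qbr_def k_def)
  then show ?thesis
    using assms unfolding is_hom_Vtensor_expand k_def[symmetric]
    by (simp add: tensor_mod_def Vmod_def kd_def sgn_par_def Rmat_def)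
       (simp add: field_simps power2_eq_square)
qed

lemma is_hom_R'mat:
  assumes "q - inverse q \<noteq> 0" and "z \<noteq> 0" and "z' \<noteq> 0"
  shows "is_hom (Vtensor q z z') (Vtensor q z' z) (R'mat z z')"
proof -
  define k where "k = q - inverse q"
  have "\<And>t. qbr q t = (t - inverse t) / k"
    by (simp add: qbr_def k_def)
  then show ?thesis
    using assms unfolding is_hom_Vtensor_expand k_def[symmetric]
    by (simp add: tensor_mod_def Vmod_def kd_def sgn_par_def R'mat_def)
       (simp add: field_simps power2_eq_square)
qed

lemma is_hom_Vtensor_relations:
  assumes "is_hom (Vtensor q z z') (Vtensor q z' z) M" and "qbr q z \<noteq> 0"
  shows "M (Y, Y) (Y, X) = 0 \<and> M (Y, Y) (X, Y) = 0 \<and> M (X, X) (X, Y) = 0 \<and> M (X, X) (Y, X) = 0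
    \<and> M (X, Y) (Y, Y) = 0 \<and> M (Y, X) (Y, Y) = 0 \<and> M (X, Y) (X, X) = 0 \<and> M (Y, X) (X, X) = 0
    \<and> M (X, X) (Y, Y) = 0 \<and> M (Y, Y) (X, X) = 0
    \<and> M (X, X) (X, X) = z * M (Y, X) (X, Y) + M (Y, X) (Y, X)
    \<and> M (X, Y) (Y, X) = z' * M (X, X) (X, X) - z * M (X, Y) (X, Y)
    \<and> M (Y, Y) (Y, Y) = M (X, Y) (X, Y) - z' * M (Y, X) (X, Y)
    \<and> qbr q z' * M (X, X) (X, X) = qbr q z * M (X, Y) (X, Y) + qbr q z' / z * M (Y, X) (X, Y)"
  using assms unfolding is_hom_Vtensor_expand
  by (simp add: tensor_mod_def Vmod_def kd_def sgn_par_def) (simp add: algebra_simps divide_inverse)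

lemma is_hom_Vtensor_eq_0:
  assumes hom: "is_hom (Vtensor q z z') (Vtensor q z' z) N"
    and diag: "N (Y, X) (Y, X) = 0" "N (X, Y) (X, Y) = 0"
    and "z \<noteq> 0" and "z\<^sup>2 \<noteq> 1" and "qbr q z \<noteq> 0" and "qbr q z' \<noteq> 0"
  shows "N = (\<lambda>t s. 0)"
proof -
  note rel = is_hom_Vtensor_relations[OF hom \<open>qbr q z \<noteq> 0\<close>]
  define f where "f = N (Y, X) (X, Y)"
  have "qbr q z' * (z * f) = qbr q z' * (f / z)"
    using rel diag unfolding f_def by auto
  then have "z * f = f / z"
    using \<open>qbr q z' \<noteq> 0\<close> mult_left_cancel by blast
  then have "f * (z\<^sup>2 - 1) = 0"
    using \<open>z \<noteq> 0\<close> by (simp add: field_simps power2_eq_square)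
  then have "f = 0"
    using \<open>z\<^sup>2 \<noteq> 1\<close> by simp
  then show ?thesis
    using rel diag unfolding fun_eq_iff all_vb_pair_iff by (simp add: f_def)
qed

lemma is_hom_Vtensor_eq_Rmat_R'mat:
  assumes "is_hom (Vtensor q z z') (Vtensor q z' z) M"
    and "q - inverse q \<noteq> 0" and "z \<noteq> 0" and "z' \<noteq> 0" and "z\<^sup>2 \<noteq> 1" and "z'\<^sup>2 \<noteq> 1"
  shows "M = (\<lambda>t s. M (Y, X) (Y, X) / (1 - z\<^sup>2) * Rmat z z' t s
                   + M (X, Y) (X, Y) / (1 - z'\<^sup>2) * R'mat z z' t s)"
proof -
  define a where "a = M (Y, X) (Y, X) / (1 - z\<^sup>2)"
  define b where "b = M (X, Y) (X, Y) / (1 - z'\<^sup>2)"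
  define N where "N = (\<lambda>t s. M t s - (a * Rmat z z' t s + b * R'mat z z' t s))"
  have "is_hom (Vtensor q z z') (Vtensor q z' z) N"
    unfolding N_def by (intro is_hom_diff is_hom_lincomb is_hom_Rmat is_hom_R'mat assms)
  moreover have "N (Y, X) (Y, X) = 0" and "N (X, Y) (X, Y) = 0"
    using assms(5,6) by (simp_all add: N_def a_def b_def Rmat_def R'mat_def)
  moreover have "qbr q z \<noteq> 0" and "qbr q z' \<noteq> 0"
    using qbr_eq_0_iff[OF assms(2,3)] qbr_eq_0_iff[OF assms(2,4)] assms(5,6) by simp_all
  ultimately have "N = (\<lambda>t s. 0)"
    using \<open>z \<noteq> 0\<close> \<open>z\<^sup>2 \<noteq> 1\<close> by (intro is_hom_Vtensor_eq_0)
  then have "M = (\<lambda>t s. a * Rmat z z' t s + b * R'mat z z' t s)"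
    by (simp add: N_def fun_eq_iff)
  then show ?thesis
    unfolding a_def b_def .
qed

lemma Rmat_R'mat_independent:
  assumes "(\<lambda>t s. a * Rmat z z' t s + b * R'mat z z' t s) = (\<lambda>t s. 0)"
    and "z\<^sup>2 \<noteq> 1" and "z'\<^sup>2 \<noteq> 1"
  shows "a = 0 \<and> b = 0"
proof -
  have "a * (1 - z\<^sup>2) = 0" and "b * (1 - z'\<^sup>2) = 0"
    using fun_cong[OF fun_cong[OF assms(1), of "(Y, X)"], of "(Y, X)"]
      fun_cong[OF fun_cong[OF assms(1), of "(X, Y)"], of "(X, Y)"]
    by (simp_all add: Rmat_def R'mat_def)
  then show ?thesis
    using assms(2,3) by simp
qed

theorem theorem5p1:
  fixes q z z' :: complex
  assumes "q \<noteq> 0" and "q ^ 4 \<noteq> 1"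
    and "z \<noteq> 0" and "z' \<noteq> 0"
    and "z \<noteq> 1" and "z \<noteq> -1" and "z' \<noteq> 1" and "z' \<noteq> -1"
    and "z * z' \<noteq> 1" and "z * z' \<noteq> -1"
  shows "{M. is_hom (tensor_mod (Vmod q z) (Vmod q z')) (tensor_mod (Vmod q z') (Vmod q z)) M}
           = {M. \<exists>a b. M = (\<lambda>t s. a * Rmat z z' t s + b * R'mat z z' t s)}
         \<and> (\<forall>a b. (\<lambda>t s. a * Rmat z z' t s + b * R'mat z z' t s) = (\<lambda>t s. 0) \<longrightarrow> a = 0 \<and> b = 0)"
proof -
  have k: "q - inverse q \<noteq> 0"
    using assms(1,2) by (rule q_minus_inverse_neq_0)
  have z2: "z\<^sup>2 \<noteq> 1" and z'2: "z'\<^sup>2 \<noteq> 1"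
    using assms(5-8) by (simp_all add: power2_eq_1_iff)
  have "is_hom (Vtensor q z z') (Vtensor q z' z) M \<longleftrightarrow>
      (\<exists>a b. M = (\<lambda>t s. a * Rmat z z' t s + b * R'mat z z' t s))" for M
  proof
    assume "is_hom (Vtensor q z z') (Vtensor q z' z) M"
    from is_hom_Vtensor_eq_Rmat_R'mat[OF this k assms(3,4) z2 z'2]
    show "\<exists>a b. M = (\<lambda>t s. a * Rmat z z' t s + b * R'mat z z' t s)"
      by blast
  next
    assume "\<exists>a b. M = (\<lambda>t s. a * Rmat z z' t s + b * R'mat z z' t s)"
    then show "is_hom (Vtensor q z z') (Vtensor q z' z) M"
      using k assms(3,4) by (auto intro!: is_hom_lincomb is_hom_Rmat is_hom_R'mat)
  qed
  then show ?thesis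
    using Rmat_R'mat_independent[OF _ z2 z'2] by simp
qed

end
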